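(* Let $\lambda,n_c,g_+,g_->0$ with $n_c<1$, let $c_B>\bar c>0$, and let $$\psi(n)=\begin{cases}\lambda,& n=1,\\ \lambda n_c,& 0<n<1,\\ 0,& n=0,\end{cases}\qquad G(c)=\begin{cases} g_+,& c>\bar c,\\ -g_-,& c<\bar c.\end{cases}$$ Set $\alpha=\sqrt{g_-/(g_++g_-)}\in(0,1)$ and $$\mathcal F(R)=\frac{\bar c}{c_B}\Big(\cosh(\sqrt\lambda R)+\sqrt{n_c}\sinh(\sqrt\lambda R)\Big)-\sqrt{n_c}\sinh\big(\sqrt\lambda(1-\alpha)R\big)-\cosh\big(\sqrt\lambda(1-\alpha)R\big).$$ Then $\mathcal F$ has a unique positive root $R$, and there is a unique monotone traveling wave: a unique pair $\sigma>0$, $R>0$ such that the system (TW-vitro) below admits a nonnegative solution with $c'\ge0$. This $R$ is the unique positive root of $\mathcal F$, and $$\sigma=R\big(\sqrt{(g_++g_-)g_-}-g_-\big).$$ Moreover $\sigma$ increases with respect to $c_B$ and decreases with respect to $\bar c$.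
   Context: System (TW-vitro), with unknowns $\sigma>0$, $R>0$ and functions $n,c,p$ on $\mathbb{R}$: (i) $-\sigma n'=nG(c)$ on $(-\infty,0]$; (ii) $n=1$ on $[0,R]$ and $n=0$ on $(R,+\infty)$; (iii) $c$ is $C^1$ on $(-\infty,R]$ and satisfies $c''=\psi(n)c$ on $(-\infty,R]$, with $c(R)=c_B$ (and $c=c_B$ on $(R,+\infty)$); (iv) $-p''=G(c)$ on $[0,R]$, $p(0)=p(R)=0$, $p\ge 0$, and $p=0$ outside $[0,R]$; (v) jump relations: $\sigma=-p'(R^-)$, $n(0)=1$, $p'(0^+)=0$. The solution $c$ is required to be bounded on $(-\infty,0]$. *)

theory Defs
  imports "HOL-Analysis.Analysis"
begin

text \<open>Consumption rate psi(n): lam for n = 1, lam*nc for 0 < n < 1, 0 for n = 0.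
  (Only used for 0 <= n <= 1, which is part of the system below.)\<close>
definition psi :: "real \<Rightarrow> real \<Rightarrow> real \<Rightarrow> real" where
  "psi lam nc n = (if n = 1 then lam else if 0 < n \<and> n < 1 then lam * nc else 0)"

text \<open>Growth rate G(c): gp for c > cbar, -gm for c < cbar. Its value at c = cbar is
  never used (all equations involving G are only imposed where c differs from cbar).\<close>
definition Gr :: "real \<Rightarrow> real \<Rightarrow> real \<Rightarrow> real \<Rightarrow> real" where
  "Gr gp gm cbar c = (if c > cbar then gp else if c < cbar then - gm else 0)"

definition alpha :: "real \<Rightarrow> real \<Rightarrow> real" where
  "alpha gp gm = sqrt (gm / (gp + gm))"

definition Ffun :: "real \<Rightarrow> real \<Rightarrow> real \<Rightarrow> real \<Rightarrow> real \<Rightarrow> real \<Rightarrow> real \<Rightarrow> real" where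
  "Ffun lam nc gp gm cbar cB R =
     cbar / cB * (cosh (sqrt lam * R) + sqrt nc * sinh (sqrt lam * R))
     - sqrt nc * sinh (sqrt lam * (1 - alpha gp gm) * R)
     - cosh (sqrt lam * (1 - alpha gp gm) * R)"

definition TW_vitro ::
  "real \<Rightarrow> real \<Rightarrow> real \<Rightarrow> real \<Rightarrow> real \<Rightarrow> real \<Rightarrow> real \<Rightarrow> real \<Rightarrow>
   (real \<Rightarrow> real) \<Rightarrow> (real \<Rightarrow> real) \<Rightarrow> (real \<Rightarrow> real) \<Rightarrow> bool" where
  "TW_vitro lam nc gp gm cbar cB \<sigma> R n c p \<longleftrightarrow>
     \<sigma> > 0 \<and> R > 0 \<and>
     \<comment> \<open>n takes values in the domain of psi\<close>
     (\<forall>x. n x \<le> 1) \<and>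
     \<comment> \<open>(i)\<close>
     continuous_on {..0} n \<and>
     (\<forall>x\<le>0. c x \<noteq> cbar \<longrightarrow>
        (n has_real_derivative (- (n x * Gr gp gm cbar (c x)) / \<sigma>)) (at x within {..0})) \<and>
     \<comment> \<open>(ii)\<close>
     (\<forall>x\<in>{0..R}. n x = 1) \<and> (\<forall>x>R. n x = 0) \<and>
     \<comment> \<open>(iii): c is C^1 on (-inf,R], c'' = psi(n) c there (in integrated form)\<close>
     (\<exists>dc. (\<forall>x\<le>R. (c has_real_derivative dc x) (at x within {..R})) \<and>
           continuous_on {..R} dc \<and>
           (\<forall>y x. y \<le> x \<and> x \<le> R \<longrightarrow>
              ((\<lambda>t. psi lam nc (n t) * c t) has_integral (dc x - dc y)) {y..x})) \<and>
     c R = cB \<and> (\<forall>x>R. c x = cB) \<and> bounded (c ` {..0}) \<and>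
     \<comment> \<open>(iv) and (v)\<close>
     (\<exists>dp. (\<forall>x\<in>{0..R}. (p has_real_derivative dp x) (at x within {0..R})) \<and>
           continuous_on {0..R} dp \<and>
           (\<forall>x\<in>{0<..<R}. c x \<noteq> cbar \<longrightarrow>
              (dp has_real_derivative (- Gr gp gm cbar (c x))) (at x)) \<and>
           \<sigma> = - dp R \<and> dp 0 = 0) \<and>
     p 0 = 0 \<and> p R = 0 \<and> (\<forall>x. 0 \<le> p x) \<and> (\<forall>x. x \<notin> {0..R} \<longrightarrow> p x = 0) \<and>
     n 0 = 1"

definition monotone_TW ::
  "real \<Rightarrow> real \<Rightarrow> real \<Rightarrow> real \<Rightarrow> real \<Rightarrow> real \<Rightarrow> real \<Rightarrow> real \<Rightarrow> bool" where
  "monotone_TW lam nc gp gm cbar cB \<sigma> R \<longleftrightarrow>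
     (\<exists>n c p. TW_vitro lam nc gp gm cbar cB \<sigma> R n c p \<and>
        (\<forall>x. 0 \<le> n x \<and> 0 \<le> c x \<and> 0 \<le> p x) \<and>
        (\<forall>x\<le>R. \<forall>d. (c has_real_derivative d) (at x within {..R}) \<longrightarrow> 0 \<le> d))"

end

theory Submission
  imports Defs
begin

text \<open>
  On the front \<open>[0,R]\<close> the cells are saturated, \<open>n = 1\<close>, so \<open>c'' = \<lambda> c\<close>. Behind it \<open>c\<close> stays below
  \<open>cbar\<close>, so \<open>n\<close> is an exponential with values in \<open>(0,1)\<close> and \<open>c'' = \<lambda> n\<^sub>c c\<close>; a nonnegative,
  nondecreasing solution of this equation on a half-line has no growing mode, which forces
  \<open>c'(0) = \<surd>(\<lambda> n\<^sub>c) c(0)\<close> and hence \<open>c = c(0) (cosh (\<surd>\<lambda> x) + \<surd>n\<^sub>c sinh (\<surd>\<lambda> x))\<close> on the front.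
  The pressure obeys \<open>p'' = g\<^sub>-\<close> while \<open>c < cbar\<close> and \<open>p'' = -g\<^sub>+\<close> afterwards; the conditions
  \<open>p(0) = p(R) = p'(0) = 0\<close> put the switch at \<open>x\<^sub>0 = (1 - \<alpha>) R\<close> and give
  \<open>\<sigma> = -p'(R) = R (\<surd>((g\<^sub>+ + g\<^sub>-) g\<^sub>-) - g\<^sub>-)\<close>. Then \<open>c(x\<^sub>0) = cbar\<close> together with \<open>c(R) = c\<^sub>B\<close> is exactly
  \<open>F(R) = 0\<close>. Conversely these formulas define a solution for every positive root. The ratio
  \<open>hprof ((1 - \<alpha>) R) / hprof R\<close> decreases strictly from \<open>1\<close> to \<open>0\<close> (a Wronskian
  argument), so \<open>F\<close> has a unique positive root, and it increases as \<open>cbar / c\<^sub>B\<close> decreases.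
\<close>

section \<open>Calculus on the real line\<close>

lemma DERIV_within_interval_imp_at:
  assumes "(f has_real_derivative D) (at x within S)" "{a..b} \<subseteq> S" "a < x" "x < b"
  shows "DERIV f x :> D"
proof -
  have "(f has_real_derivative D) (at x within {a..b})"
    using assms(1,2) DERIV_subset by blast
  moreover have "at x within {a..b} = at x"
    using assms(3,4) by (intro at_within_interior) auto
  ultimately show ?thesis by simp
qed

lemma has_integral_primitive_DERIV:
  fixes f F :: "real \<Rightarrow> real"
  assumes "\<And>y. y \<in> {a..b} \<Longrightarrow> (f has_integral (F y - F a)) {a..y}"
    and "continuous_on {a..b} f" "a < x" "x < b"
  shows "DERIV F x :> f x"
proof -
  have F_eq: "F y = F a + integral {a..y} f" if "y \<in> {a..b}" for y
    using assms(1)[OF that] by (simp add: integral_unique)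
  have "((\<lambda>y. F a + integral {a..y} f) has_real_derivative f x) (at x within {a..b})"
    using integral_has_real_derivative[OF assms(2), of x] assms(3,4)
    by (auto intro!: derivative_eq_intros)
  then have "(F has_real_derivative f x) (at x within {a..b})"
    by (rule has_field_derivative_transform_within[where d = 1]) (use assms(3,4) in \<open>auto simp: F_eq[symmetric]\<close>)
  then show ?thesis
    using assms(3,4) by (intro DERIV_within_interval_imp_at[where a = a and b = b]) auto
qed

lemma DERIV_affine_imp_quadratic:
  fixes f :: "real \<Rightarrow> real"
  assumes "a \<le> b" "continuous_on {a..b} f"
    and "\<And>t. a < t \<Longrightarrow> t < b \<Longrightarrow> DERIV f t :> m + l * (t - a)"
  shows "f b = f a + m * (b - a) + l / 2 * (b - a)\<^sup>2"
proof (cases "a = b")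
  case False
  let ?g = "\<lambda>t. f t - m * (t - a) - l / 2 * (t - a)\<^sup>2"
  have "?g b = ?g a"
  proof (rule DERIV_isconst_end[where f = ?g])
    show "continuous_on {a..b} ?g"
      using assms(2) by (intro continuous_intros)
    fix t assume "a < t" "t < b"
    from assms(3)[OF this] show "DERIV ?g t :> 0"
      by (auto intro!: derivative_eq_intros)
  qed (use assms(1) False in auto)
  then show ?thesis by simp
qed simp

lemma linear_ode_solution:
  fixes f :: "real \<Rightarrow> real"
  assumes "a \<le> b" "continuous_on {a..b} f" "\<And>t. a < t \<Longrightarrow> t < b \<Longrightarrow> DERIV f t :> k * f t"
  shows "f b = f a * exp (k * (b - a))"
proof (cases "a = b")
  case False
  let ?g = "\<lambda>t. f t * exp (- k * t)"
  have "?g b = ?g a"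
  proof (rule DERIV_isconst_end[where f = ?g])
    show "continuous_on {a..b} ?g"
      using assms(2) by (intro continuous_intros)
    fix t assume "a < t" "t < b"
    from assms(3)[OF this] show "DERIV ?g t :> 0"
      by (auto intro!: derivative_eq_intros simp: algebra_simps)
  qed (use assms(1) False in auto)
  then have "f b = f a * (exp (- k * a) * exp (k * b))"
    by (simp add: exp_minus field_simps)
  then show ?thesis
    by (simp add: algebra_simps flip: exp_add)
qed simp

lemma second_order_ode_characteristic:
  fixes c dc :: "real \<Rightarrow> real"
  assumes "a \<le> b" "continuous_on {a..b} c" "continuous_on {a..b} dc"
    and "\<And>t. a < t \<Longrightarrow> t < b \<Longrightarrow> DERIV c t :> dc t"
    and "\<And>t. a < t \<Longrightarrow> t < b \<Longrightarrow> DERIV dc t :> s\<^sup>2 * c t"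
  shows "dc b + s * c b = (dc a + s * c a) * exp (s * (b - a))"
proof (rule linear_ode_solution[where f = "\<lambda>t. dc t + s * c t"])
  show "continuous_on {a..b} (\<lambda>t. dc t + s * c t)"
    using assms(2,3) by (intro continuous_intros)
  fix t assume "a < t" "t < b"
  with assms(4,5) show "DERIV (\<lambda>t. dc t + s * c t) t :> s * (dc t + s * c t)"
    by (auto intro!: derivative_eq_intros simp: power2_eq_square algebra_simps)
qed (use assms(1) in simp)

lemma second_order_ode_cosh_sinh:
  fixes c dc :: "real \<Rightarrow> real"
  assumes "s \<noteq> 0" "a \<le> b" "continuous_on {a..b} c" "continuous_on {a..b} dc"
    and "\<And>t. a < t \<Longrightarrow> t < b \<Longrightarrow> DERIV c t :> dc t"
    and "\<And>t. a < t \<Longrightarrow> t < b \<Longrightarrow> DERIV dc t :> s\<^sup>2 * c t"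
  shows "c b = c a * cosh (s * (b - a)) + dc a / s * sinh (s * (b - a))"
proof -
  have plus: "dc b + s * c b = (dc a + s * c a) * exp (s * (b - a))"
    by (rule second_order_ode_characteristic) (use assms in auto)
  have minus: "dc b + (- s) * c b = (dc a + (- s) * c a) * exp ((- s) * (b - a))"
    by (rule second_order_ode_characteristic) (use assms in auto)
  have "2 * s * c b = (dc a + s * c a) * exp (s * (b - a)) - (dc a - s * c a) * exp (- (s * (b - a)))"
    using plus minus by (simp add: algebra_simps)
  also have "\<dots> = 2 * s * (c a * cosh (s * (b - a)) + dc a / s * sinh (s * (b - a)))"
    using assms(1) by (simp add: cosh_def sinh_def field_simps)
  finally show ?thesis using assms(1) by simp
qed

text \<open>On a half-line the growing mode \<open>c' - s c\<close> must vanish: it is dominated by the decaying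
  mode \<open>c' + s c\<close> as soon as \<open>c\<close> and \<open>c'\<close> are nonnegative.\<close>
lemma nonneg_nondecreasing_solution_slope:
  fixes c dc :: "real \<Rightarrow> real"
  assumes "0 < s" "continuous_on {..0} c" "continuous_on {..0} dc"
    and "\<And>t. t < 0 \<Longrightarrow> DERIV c t :> dc t" "\<And>t. t < 0 \<Longrightarrow> DERIV dc t :> s\<^sup>2 * c t"
    and "\<And>t. t \<le> 0 \<Longrightarrow> 0 \<le> c t" "\<And>t. t \<le> 0 \<Longrightarrow> 0 \<le> dc t"
  shows "dc 0 = s * c 0"
proof -
  have bound: "\<bar>dc 0 - s * c 0\<bar> \<le> (dc 0 + s * c 0) * exp (2 * s * x)" if "x < 0" for x
  proof -
    have cont: "continuous_on {x..0} c" "continuous_on {x..0} dc"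
      using assms(2,3) by (auto elim: continuous_on_subset)
    have plus: "dc 0 + s * c 0 = (dc x + s * c x) * exp (s * (0 - x))"
      by (rule second_order_ode_characteristic) (use that cont assms(4,5) in auto)
    have minus: "dc 0 + (- s) * c 0 = (dc x + (- s) * c x) * exp ((- s) * (0 - x))"
      by (rule second_order_ode_characteristic) (use that cont assms(4,5) in auto)
    have "0 \<le> dc x" "0 \<le> s * c x"
      using assms(1,6,7) that by auto
    then have "\<bar>dc x - s * c x\<bar> \<le> dc x + s * c x"
      by (simp add: abs_le_iff)
    then have "\<bar>dc x - s * c x\<bar> * exp (s * x) \<le> (dc x + s * c x) * exp (s * x)"
      by (simp add: mult_right_mono)
    also have "\<dots> = (dc 0 + s * c 0) * exp (2 * s * x)"
      using plus by (simp add: mult.assoc flip: exp_add)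
    finally show ?thesis
      using minus by (simp add: abs_mult)
  qed
  have "((\<lambda>x. (dc 0 + s * c 0) * exp (2 * s * x)) \<longlongrightarrow> (dc 0 + s * c 0) * 0) at_bot"
    using assms(1)
    by (intro tendsto_mult tendsto_const filterlim_compose[OF exp_at_bot]
        filterlim_tendsto_pos_mult_at_bot[OF tendsto_const] filterlim_ident) auto
  moreover have "\<forall>\<^sub>F x in at_bot. \<bar>dc 0 - s * c 0\<bar> \<le> (dc 0 + s * c 0) * exp (2 * s * x)"
    using bound eventually_at_bot_dense by blast
  ultimately have "\<bar>dc 0 - s * c 0\<bar> \<le> 0"
    by (intro tendsto_le[OF trivial_limit_at_bot_linorder _ tendsto_const]) auto
  then show ?thesis by simp
qed

lemma strict_antimono_crossing_ex1:
  fixes f :: "real \<Rightarrow> real"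
  assumes "continuous_on {0..} f" "\<And>x y. 0 \<le> x \<Longrightarrow> x < y \<Longrightarrow> f y < f x"
    and "0 \<le> b" "f b < k" "k < f 0"
  shows "\<exists>!x. 0 < x \<and> f x = k"
proof (rule ex_ex1I)
  have "continuous_on {0..b} f"
    using assms(1) by (rule continuous_on_subset) auto
  then obtain x where "0 \<le> x" "x \<le> b" "f x = k"
    using IVT2'[of f b k 0] assms(3,4,5) by auto
  with assms(5) show "\<exists>x. 0 < x \<and> f x = k"
    by (metis less_eq_real_def less_irrefl)
next
  fix x y assume "0 < x \<and> f x = k" "0 < y \<and> f y = k"
  then show "x = y"
    using assms(2)[of x y] assms(2)[of y x] by (cases x y rule: linorder_cases) auto
qed

lemma DERIV_if_le:
  fixes f g f' g' :: "real \<Rightarrow> real"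
  assumes "\<And>x. DERIV f x :> f' x" "\<And>x. DERIV g x :> g' x" "f a = g a" "f' a = g' a"
  shows "DERIV (\<lambda>x. if x \<le> a then f x else g x) x :> (if x \<le> a then f' x else g' x)"
proof -
  let ?h = "\<lambda>x. if x \<le> a then f x else g x"
  consider "x < a" | "x = a" | "a < x" by linarith
  then show ?thesis
  proof cases
    case 1
    have "DERIV ?h x :> f' x"
      by (rule has_field_derivative_transform_within_open[OF assms(1), of "{..<a}"]) (use 1 in auto)
    with 1 show ?thesis by simp
  next
    case 3
    have "DERIV ?h x :> g' x"
      by (rule has_field_derivative_transform_within_open[OF assms(2), of "{a<..}"]) (use 3 in auto)
    with 3 show ?thesis by simp
  next
    case 2
    have left: "(?h has_real_derivative f' a) (at a within {..a})"
      by (rule has_field_derivative_transform_within[where d = 1, OF DERIV_subset[OF assms(1)]]) auto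
    have "(?h has_real_derivative g' a) (at a within {a..})"
      by (rule has_field_derivative_transform_within[where d = 1, OF DERIV_subset[OF assms(2)]])
        (use assms(3) in auto)
    then have right: "(?h has_real_derivative f' a) (at a within {a..})"
      using assms(4) by simp
    have "(?h has_real_derivative f' a) (at a within {..a} \<union> {a..})"
      using left right by (simp add: has_field_derivative_iff Lim_within_Un)
    moreover have "{..a} \<union> {a..} = (UNIV :: real set)" by auto
    ultimately show ?thesis using 2 by simp
  qed
qed

section \<open>The front profile\<close>

text \<open>On the front \<open>[0,R]\<close> every monotone wave has \<open>c(x) = c(0) \<cdot> hprof x\<close>;
  \<open>dhprof\<close> is the derivative of \<open>hprof\<close> divided by \<open>\<surd>\<lambda>\<close>.\<close>
definition hprof :: "real \<Rightarrow> real \<Rightarrow> real \<Rightarrow> real" where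
  "hprof lam nc t = cosh (sqrt lam * t) + sqrt nc * sinh (sqrt lam * t)"

definition dhprof :: "real \<Rightarrow> real \<Rightarrow> real \<Rightarrow> real" where
  "dhprof lam nc t = sinh (sqrt lam * t) + sqrt nc * cosh (sqrt lam * t)"

lemma hprof_0 [simp]: "hprof lam nc 0 = 1"
  by (simp add: hprof_def)

lemma dhprof_0 [simp]: "dhprof lam nc 0 = sqrt nc"
  by (simp add: dhprof_def)

lemma has_field_derivative_hprof [THEN DERIV_chain2, derivative_intros]:
  "(hprof lam nc has_field_derivative sqrt lam * dhprof lam nc t) (at t)"
  unfolding hprof_def dhprof_def by (auto intro!: derivative_eq_intros simp: algebra_simps)

lemma has_field_derivative_dhprof [THEN DERIV_chain2, derivative_intros]:
  "(dhprof lam nc has_field_derivative sqrt lam * hprof lam nc t) (at t)"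
  unfolding hprof_def dhprof_def by (auto intro!: derivative_eq_intros simp: algebra_simps)

lemma continuous_on_hprof [continuous_intros]:
  "continuous_on A f \<Longrightarrow> continuous_on A (\<lambda>x. hprof lam nc (f x))"
  unfolding hprof_def by (intro continuous_intros)

lemma continuous_on_dhprof [continuous_intros]:
  "continuous_on A f \<Longrightarrow> continuous_on A (\<lambda>x. dhprof lam nc (f x))"
  unfolding dhprof_def by (intro continuous_intros)

lemma hprof_pos: "0 \<le> lam \<Longrightarrow> 0 \<le> nc \<Longrightarrow> 0 \<le> t \<Longrightarrow> 0 < hprof lam nc t"
  unfolding hprof_def by (intro add_pos_nonneg) auto

lemma dhprof_pos: "0 \<le> lam \<Longrightarrow> 0 < nc \<Longrightarrow> 0 \<le> t \<Longrightarrow> 0 < dhprof lam nc t"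
  unfolding dhprof_def by (intro add_nonneg_pos) auto

lemma hprof_strict_mono:
  assumes "0 < lam" "0 < nc" "0 \<le> u" "u < v"
  shows "hprof lam nc u < hprof lam nc v"
proof (rule DERIV_pos_imp_increasing[OF assms(4)])
  fix t assume "u \<le> t" "t \<le> v"
  then have "0 < sqrt lam * dhprof lam nc t"
    using assms dhprof_pos[of lam nc t] by simp
  moreover have "DERIV (hprof lam nc) t :> sqrt lam * dhprof lam nc t"
    by (auto intro!: derivative_eq_intros)
  ultimately show "\<exists>y. DERIV (hprof lam nc) t :> y \<and> 0 < y" by blast
qed

text \<open>The Wronskian of \<open>hprof\<close> and \<open>dhprof\<close> is \<open>(1 - nc) sinh (\<surd>\<lambda> (v - u))\<close>, so the logarithmic
  derivative \<open>dhprof / hprof\<close> is nondecreasing.\<close>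
lemma dhprof_mult_hprof_le:
  assumes "0 \<le> lam" "0 \<le> nc" "nc \<le> 1" "u \<le> v"
  shows "dhprof lam nc u * hprof lam nc v \<le> hprof lam nc u * dhprof lam nc v"
proof -
  have wronskian: "(cosh x + q * sinh x) * (sinh y + q * cosh y) - (sinh x + q * cosh x) * (cosh y + q * sinh y)
      = (1 - q\<^sup>2) * sinh (y - x)" for x y q :: real
    by (simp add: sinh_diff power2_eq_square algebra_simps)
  have "hprof lam nc u * dhprof lam nc v - dhprof lam nc u * hprof lam nc v
      = (1 - (sqrt nc)\<^sup>2) * sinh (sqrt lam * v - sqrt lam * u)"
    unfolding hprof_def dhprof_def by (rule wronskian)
  also have "\<dots> \<ge> 0"
    using assms by (intro mult_nonneg_nonneg) (auto intro: mult_left_mono)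
  finally show ?thesis by simp
qed

lemma hprof_ratio_strict_antimono:
  assumes "0 < lam" "0 < nc" "nc < 1" "0 < a" "a < 1" "0 \<le> x" "x < y"
  shows "hprof lam nc (a * y) / hprof lam nc y < hprof lam nc (a * x) / hprof lam nc x"
proof (rule DERIV_neg_imp_decreasing[OF assms(7)])
  fix t assume "x \<le> t" "t \<le> y"
  then have "0 \<le> t" using assms(6) by simp
  let ?H = "hprof lam nc" and ?D = "dhprof lam nc"
  have pos: "0 < ?H t" "0 < ?H (a * t)" "0 < ?D (a * t)"
    using \<open>0 \<le> t\<close> assms by (auto intro!: hprof_pos dhprof_pos)
  have "?D (a * t) * ?H t \<le> ?H (a * t) * ?D t"
    using assms \<open>0 \<le> t\<close> by (intro dhprof_mult_hprof_le) (auto simp: mult_left_le_one_le)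
  moreover have "a * (?D (a * t) * ?H t) < ?D (a * t) * ?H t"
    using assms pos by simp
  ultimately have "sqrt lam * (a * ?D (a * t) * ?H t - ?H (a * t) * ?D t) < 0"
    using assms by (intro mult_pos_neg) auto
  then have "sqrt lam * (a * ?D (a * t) * ?H t - ?H (a * t) * ?D t) / (?H t)\<^sup>2 < 0"
    using pos by (simp add: divide_neg_pos)
  moreover have "DERIV (\<lambda>R. ?H (a * R) / ?H R) t :>
      sqrt lam * (a * ?D (a * t) * ?H t - ?H (a * t) * ?D t) / (?H t)\<^sup>2"
    using pos by (auto intro!: derivative_eq_intros simp: power2_eq_square algebra_simps)
  ultimately show "\<exists>d. DERIV (\<lambda>R. ?H (a * R) / ?H R) t :> d \<and> d < 0" by blast
qed

lemma hprof_ratio_le_exp: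
  assumes "0 \<le> lam" "0 \<le> nc" "nc \<le> 1" "0 \<le> a" "0 \<le> t"
  shows "hprof lam nc (a * t) / hprof lam nc t \<le> 2 * exp (- (sqrt lam * (1 - a) * t))"
proof -
  have "sqrt nc * sinh (sqrt lam * (a * t)) \<le> sinh (sqrt lam * (a * t))"
    using assms by (intro mult_left_le_one_le) auto
  then have upper: "hprof lam nc (a * t) \<le> exp (sqrt lam * (a * t))"
    by (simp add: hprof_def flip: cosh_plus_sinh)
  have "exp (sqrt lam * t) / 2 \<le> cosh (sqrt lam * t)"
    by (simp add: cosh_def)
  also have "\<dots> \<le> hprof lam nc t"
    using assms by (simp add: hprof_def)
  finally have lower: "exp (sqrt lam * t) / 2 \<le> hprof lam nc t" .
  have "hprof lam nc (a * t) / hprof lam nc t \<le> exp (sqrt lam * (a * t)) / (exp (sqrt lam * t) / 2)"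
    using upper lower by (intro frac_le) (auto intro: hprof_pos)
  also have "\<dots> = 2 * exp (- (sqrt lam * (1 - a) * t))"
    by (simp add: algebra_simps exp_diff flip: exp_add)
  finally show ?thesis .
qed

section \<open>The roots of \<open>Ffun\<close>\<close>

lemma alpha_bounds: "0 < gp \<Longrightarrow> 0 < gm \<Longrightarrow> 0 < alpha gp gm \<and> alpha gp gm < 1"
  by (simp add: alpha_def)

lemma alpha_squared: "0 < gp \<Longrightarrow> 0 < gm \<Longrightarrow> (alpha gp gm)\<^sup>2 = gm / (gp + gm)"
  by (simp add: alpha_def)

lemma alpha_scaled:
  assumes "0 < gp" "0 < gm"
  shows "(gp + gm) * alpha gp gm = sqrt ((gp + gm) * gm)"
proof -
  have "(gp + gm) * gm = (gp + gm)\<^sup>2 * (gm / (gp + gm))"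
    using assms by (simp add: field_simps power2_eq_square)
  then have "sqrt ((gp + gm) * gm) = sqrt ((gp + gm)\<^sup>2) * sqrt (gm / (gp + gm))"
    by (metis real_sqrt_mult)
  then show ?thesis
    using assms by (simp add: alpha_def)
qed

lemma speed_factor_pos: "0 < gp \<Longrightarrow> 0 < gm \<Longrightarrow> 0 < sqrt ((gp + gm) * gm) - gm"
  using real_sqrt_less_mono[of "gm * gm" "(gp + gm) * gm"] by simp

lemma Ffun_eq_hprof:
  "Ffun lam nc gp gm cbar cB R = cbar / cB * hprof lam nc R - hprof lam nc ((1 - alpha gp gm) * R)"
  unfolding Ffun_def hprof_def by (simp add: mult.assoc algebra_simps)

lemma Ffun_eq_0_iff:
  assumes "0 < cB" "0 \<le> lam" "0 \<le> nc" "0 \<le> R"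
  shows "Ffun lam nc gp gm cbar cB R = 0 \<longleftrightarrow>
    hprof lam nc ((1 - alpha gp gm) * R) / hprof lam nc R = cbar / cB"
  using hprof_pos[of lam nc R] assms by (auto simp: Ffun_eq_hprof field_simps)

locale tw_params =
  fixes lam nc gp gm cbar cB :: real
  assumes lam_pos: "0 < lam" and nc_pos: "0 < nc" and nc_less_1: "nc < 1"
    and gp_pos: "0 < gp" and gm_pos: "0 < gm"
    and cbar_pos: "0 < cbar" and cbar_less_cB: "cbar < cB"
begin

lemma alpha_pos: "0 < alpha gp gm" and alpha_less_1: "alpha gp gm < 1"
  using alpha_bounds[OF gp_pos gm_pos] by auto

lemma Ffun_root_ex1: "\<exists>!R. 0 < R \<and> Ffun lam nc gp gm cbar cB R = 0"
proof -
  define k where "k = cbar / cB"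
  define a where "a = 1 - alpha gp gm"
  \<comment> \<open>\<open>b\<close> is large enough for the bound \<open>hprof_ratio_le_exp\<close> to drop below \<open>k\<close>.\<close>
  define b where "b = (ln (2 / k) + 1) / (sqrt lam * alpha gp gm)"
  have k: "0 < k" "k < 1"
    using cbar_pos cbar_less_cB by (auto simp: k_def)
  have a: "0 < a" "a < 1"
    using alpha_pos alpha_less_1 by (auto simp: a_def)
  have "0 < ln (2 / k)" using k by simp
  then have b: "0 < b"
    using alpha_pos lam_pos by (simp add: b_def)
  have "- (sqrt lam * (1 - a) * b) = - ln (2 / k) + - 1"
    using alpha_pos lam_pos by (simp add: a_def b_def)
  then have "2 * exp (- (sqrt lam * (1 - a) * b)) = 2 * (exp (- ln (2 / k)) * exp (- 1))"
    by (simp only: exp_add)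
  also have "\<dots> = k * exp (- 1)"
    using k by (simp add: exp_minus)
  also have "\<dots> < k" using k by simp
  finally have "hprof lam nc (a * b) / hprof lam nc b < k"
    using hprof_ratio_le_exp[of lam nc a b] lam_pos nc_pos nc_less_1 a b by simp
  moreover have "continuous_on {0..} (\<lambda>R. hprof lam nc (a * R) / hprof lam nc R)"
    using lam_pos nc_pos
    by (intro continuous_intros) (auto dest: hprof_pos[of lam nc, rotated 2] simp: less_imp_le)
  ultimately have "\<exists>!R. 0 < R \<and> hprof lam nc (a * R) / hprof lam nc R = k"
    using hprof_ratio_strict_antimono[of lam nc a] lam_pos nc_pos nc_less_1 a b k
    by (intro strict_antimono_crossing_ex1[where b = b]) auto
  moreover have "Ffun lam nc gp gm cbar cB R = 0 \<longleftrightarrow> hprof lam nc (a * R) / hprof lam nc R = k"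
    if "0 < R" for R
    using Ffun_eq_0_iff[of cB lam nc R] that lam_pos nc_pos cbar_pos cbar_less_cB
    by (simp add: a_def k_def)
  ultimately show ?thesis by (metis (no_types, lifting))
qed

end

lemma Ffun_root_less:
  assumes "0 < lam" "0 < nc" "nc < 1" "0 < gp" "0 < gm" "0 < cB" "0 < cB'" "0 < R" "0 < R'"
    and "Ffun lam nc gp gm cbar cB R = 0" "Ffun lam nc gp gm cbar' cB' R' = 0"
    and "cbar' / cB' < cbar / cB"
  shows "R < R'"
proof (rule ccontr)
  let ?ratio = "\<lambda>R. hprof lam nc ((1 - alpha gp gm) * R) / hprof lam nc R"
  assume "\<not> R < R'"
  then have "?ratio R \<le> ?ratio R'"
    using hprof_ratio_strict_antimono[of lam nc "1 - alpha gp gm" R' R] alpha_bounds[of gp gm] assms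
    by (cases "R = R'") auto
  then show False
    using assms Ffun_eq_0_iff[of cB lam nc R] Ffun_eq_0_iff[of cB' lam nc R'] by auto
qed

section \<open>The pressure\<close>

definition switch_point :: "real \<Rightarrow> real \<Rightarrow> real \<Rightarrow> real" where
  "switch_point gp gm R = (1 - alpha gp gm) * R"

lemma switch_point_bounds:
  "0 < gp \<Longrightarrow> 0 < gm \<Longrightarrow> 0 < R \<Longrightarrow> 0 < switch_point gp gm R \<and> switch_point gp gm R < R"
  using alpha_bounds[of gp gm] by (simp add: switch_point_def)

text \<open>The pressure satisfies \<open>p'' = g\<^sub>-\<close> before and \<open>p'' = -g\<^sub>+\<close> after the switch point \<open>x\<^sub>0\<close>;
  integrating twice, \<open>p(R) = p(0) = 0\<close> and \<open>p'(0) = 0\<close> force \<open>g\<^sub>- R\<^sup>2 = (g\<^sub>+ + g\<^sub>-) (R - x\<^sub>0)\<^sup>2\<close>.\<close>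
lemma pressure_switch_point:
  fixes p dp :: "real \<Rightarrow> real"
  assumes "0 < gp" "0 < gm" "0 \<le> x0" "x0 \<le> R"
    and p_deriv: "\<And>x. x \<in> {0..R} \<Longrightarrow> (p has_real_derivative dp x) (at x within {0..R})"
    and dp_cont: "continuous_on {0..R} dp"
    and dp_left: "\<And>x. 0 < x \<Longrightarrow> x < x0 \<Longrightarrow> DERIV dp x :> gm"
    and dp_right: "\<And>x. x0 < x \<Longrightarrow> x < R \<Longrightarrow> DERIV dp x :> - gp"
    and "dp 0 = 0" "p 0 = 0" "p R = 0"
  shows "x0 = switch_point gp gm R" and "- dp R = R * (sqrt ((gp + gm) * gm) - gm)"
proof -
  have dp_eq_left: "dp x = gm * x" if "0 \<le> x" "x \<le> x0" for x
  proof -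
    have "continuous_on {0..x} dp"
      by (rule continuous_on_subset[OF dp_cont]) (use that assms(4) in auto)
    then show ?thesis
      using DERIV_affine_imp_quadratic[of 0 x dp gm 0] dp_left that \<open>dp 0 = 0\<close> by simp
  qed
  have dp_eq_right: "dp x = gm * x0 - gp * (x - x0)" if "x0 \<le> x" "x \<le> R" for x
  proof -
    have "continuous_on {x0..x} dp"
      by (rule continuous_on_subset[OF dp_cont]) (use that assms(3) in auto)
    then show ?thesis
      using DERIV_affine_imp_quadratic[of x0 x dp "- gp" 0] dp_right that dp_eq_left[of x0] assms(3)
      by simp
  qed
  have p_cont: "continuous_on {0..R} p"
    using p_deriv by (rule DERIV_continuous_on)
  have p_DERIV: "DERIV p x :> dp x" if "0 < x" "x < R" for x
    using that by (intro DERIV_within_interval_imp_at[OF p_deriv, of x 0 R]) auto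
  have "p x0 = p 0 + 0 * (x0 - 0) + gm / 2 * (x0 - 0)\<^sup>2"
  proof (rule DERIV_affine_imp_quadratic[OF assms(3)])
    show "continuous_on {0..x0} p"
      by (rule continuous_on_subset[OF p_cont]) (use assms(4) in auto)
    fix t assume "0 < t" "t < x0"
    then show "DERIV p t :> 0 + gm * (t - 0)"
      using p_DERIV[of t] dp_eq_left[of t] assms(4) by simp
  qed
  moreover have "p R = p x0 + gm * x0 * (R - x0) + - gp / 2 * (R - x0)\<^sup>2"
  proof (rule DERIV_affine_imp_quadratic[OF assms(4)])
    show "continuous_on {x0..R} p"
      by (rule continuous_on_subset[OF p_cont]) (use assms(3) in auto)
    fix t assume "x0 < t" "t < R"
    then show "DERIV p t :> gm * x0 + - gp * (t - x0)"
      using p_DERIV[of t] dp_eq_right[of t] assms(3) by simp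
  qed
  ultimately have "gm * R\<^sup>2 = (gp + gm) * (R - x0)\<^sup>2"
    using \<open>p 0 = 0\<close> \<open>p R = 0\<close> by (simp add: power2_eq_square field_simps)
  then have "(R - x0)\<^sup>2 = (alpha gp gm * R)\<^sup>2"
    using assms(1,2) by (simp add: power_mult_distrib alpha_squared field_simps)
  then have R_x0: "R - x0 = alpha gp gm * R"
    using assms(3,4) alpha_bounds[of gp gm] assms(1,2) by (simp add: power2_eq_iff_nonneg)
  then have x0_eq: "x0 = (1 - alpha gp gm) * R"
    by (simp add: algebra_simps)
  then show "x0 = switch_point gp gm R"
    by (simp add: switch_point_def)
  have "- dp R = R * ((gp + gm) * alpha gp gm - gm)"
    using dp_eq_right[of R] assms(4) unfolding R_x0 x0_eq by (simp add: algebra_simps)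
  then show "- dp R = R * (sqrt ((gp + gm) * gm) - gm)"
    using alpha_scaled[OF assms(1,2)] by simp
qed

section \<open>Monotone waves have a root of \<open>Ffun\<close> as front\<close>

locale monotone_wave = tw_params +
  fixes \<sigma> R :: real and n c p dc dp :: "real \<Rightarrow> real"
  assumes sigma_pos: "0 < \<sigma>" and R_pos: "0 < R"
    and n_cont: "continuous_on {..0} n"
    and n_deriv: "\<And>x. x \<le> 0 \<Longrightarrow> c x \<noteq> cbar \<Longrightarrow>
      (n has_real_derivative - (n x * Gr gp gm cbar (c x)) / \<sigma>) (at x within {..0})"
    and n_front: "\<And>x. x \<in> {0..R} \<Longrightarrow> n x = 1"
    and c_deriv: "\<And>x. x \<le> R \<Longrightarrow> (c has_real_derivative dc x) (at x within {..R})"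
    and dc_cont: "continuous_on {..R} dc"
    and dc_integral: "\<And>x y. y \<le> x \<Longrightarrow> x \<le> R \<Longrightarrow>
      ((\<lambda>t. psi lam nc (n t) * c t) has_integral (dc x - dc y)) {y..x}"
    and c_R: "c R = cB"
    and p_deriv: "\<And>x. x \<in> {0..R} \<Longrightarrow> (p has_real_derivative dp x) (at x within {0..R})"
    and dp_cont: "continuous_on {0..R} dp"
    and dp_deriv: "\<And>x. x \<in> {0<..<R} \<Longrightarrow> c x \<noteq> cbar \<Longrightarrow>
      (dp has_real_derivative - Gr gp gm cbar (c x)) (at x)"
    and sigma_eq: "\<sigma> = - dp R" and dp_0: "dp 0 = 0" and p_0: "p 0 = 0" and p_R: "p R = 0"
    and c_nonneg: "\<And>x. 0 \<le> c x" and dc_nonneg: "\<And>x. x \<le> R \<Longrightarrow> 0 \<le> dc x"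

lemma (in tw_params) monotone_TW_imp_monotone_wave:
  assumes "monotone_TW lam nc gp gm cbar cB \<sigma> R"
  obtains n c p dc dp where "monotone_wave lam nc gp gm cbar cB \<sigma> R n c p dc dp"
proof -
  obtain n c p where TW: "TW_vitro lam nc gp gm cbar cB \<sigma> R n c p"
    and nonneg: "\<forall>x. 0 \<le> n x \<and> 0 \<le> c x \<and> 0 \<le> p x"
    and mono: "\<forall>x\<le>R. \<forall>d. (c has_real_derivative d) (at x within {..R}) \<longrightarrow> 0 \<le> d"
    using assms unfolding monotone_TW_def by blast
  obtain dc dp where c_deriv: "\<forall>x\<le>R. (c has_real_derivative dc x) (at x within {..R})"
    and dc: "continuous_on {..R} dc"
      "\<forall>y x. y \<le> x \<and> x \<le> R \<longrightarrow> ((\<lambda>t. psi lam nc (n t) * c t) has_integral (dc x - dc y)) {y..x}"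
    and dp: "\<forall>x\<in>{0..R}. (p has_real_derivative dp x) (at x within {0..R})" "continuous_on {0..R} dp"
      "\<forall>x\<in>{0<..<R}. c x \<noteq> cbar \<longrightarrow> (dp has_real_derivative (- Gr gp gm cbar (c x))) (at x)"
      "\<sigma> = - dp R" "dp 0 = 0"
    using TW unfolding TW_vitro_def by blast
  have "\<forall>x\<le>R. 0 \<le> dc x"
    using mono c_deriv by blast
  with TW nonneg c_deriv dc dp have "monotone_wave lam nc gp gm cbar cB \<sigma> R n c p dc dp"
    unfolding TW_vitro_def by unfold_locales simp_all
  then show ?thesis by (rule that)
qed

context monotone_wave
begin

lemma c_cont: "continuous_on {..R} c"
  using c_deriv by (intro DERIV_continuous_on) auto

lemma c_DERIV: "x < R \<Longrightarrow> DERIV c x :> dc x"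
  by (rule DERIV_within_interval_imp_at[OF c_deriv, of x "x - 1" R]) auto

lemma c_mono:
  assumes "x \<le> y" "y \<le> R"
  shows "c x \<le> c y"
proof (rule DERIV_nonneg_imp_increasing_open[OF assms(1)])
  fix t assume "x < t" "t < y"
  then show "\<exists>d. DERIV c t :> d \<and> 0 \<le> d"
    using c_DERIV[of t] dc_nonneg[of t] assms(2) by auto
next
  show "continuous_on {x..y} c"
    by (rule continuous_on_subset[OF c_cont]) (use assms(2) in auto)
qed

lemma dc_DERIV:
  assumes "\<And>t. t \<in> {a..b} \<Longrightarrow> psi lam nc (n t) = q" "a < x" "x < b" "b \<le> R"
  shows "DERIV dc x :> q * c x"
proof (rule has_integral_primitive_DERIV[where a = a and b = b])
  fix y assume "y \<in> {a..b}"
  then show "((\<lambda>t. q * c t) has_integral dc y - dc a) {a..y}"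
    using dc_integral[of a y] assms(1,4)
      has_integral_cong[of "{a..y}" "\<lambda>t. psi lam nc (n t) * c t" "\<lambda>t. q * c t"] by auto
next
  show "continuous_on {a..b} (\<lambda>t. q * c t)"
    using assms(4) by (intro continuous_intros continuous_on_subset[OF c_cont]) auto
qed (use assms(2,3) in auto)

lemma dc_DERIV_front: "0 < x \<Longrightarrow> x < R \<Longrightarrow> DERIV dc x :> lam * c x"
  using n_front by (intro dc_DERIV[where a = 0 and b = R]) (auto simp: psi_def)

text \<open>Where \<open>c > 0\<close>, \<open>c'' = \<lambda> c > 0\<close> makes \<open>c'\<close> increasing from a nonnegative value.\<close>
lemma c_strict_mono:
  assumes "0 \<le> u" "u < v" "v \<le> R" "0 < c u"
  shows "c u < c v"
proof (rule DERIV_pos_imp_increasing_open[OF assms(2)])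
  fix t assume t: "u < t" "t < v"
  have "dc u < dc t"
  proof (rule DERIV_pos_imp_increasing_open[OF t(1)])
    fix s assume "u < s" "s < t"
    moreover have "c u \<le> c s"
      using c_mono \<open>u < s\<close> \<open>s < t\<close> t assms(3) by simp
    ultimately show "\<exists>d. DERIV dc s :> d \<and> 0 < d"
      using dc_DERIV_front[of s] assms lam_pos t by auto
  next
    show "continuous_on {u..t} dc"
      by (rule continuous_on_subset[OF dc_cont]) (use t assms(3) in auto)
  qed
  then show "\<exists>d. DERIV c t :> d \<and> 0 < d"
    using c_DERIV[of t] dc_nonneg[of u] t assms by auto
next
  show "continuous_on {u..v} c"
    by (rule continuous_on_subset[OF c_cont]) (use assms(3) in auto)
qed

lemma switch_point_exists:
  "\<exists>x0. 0 \<le> x0 \<and> x0 \<le> R \<and> (\<forall>x. 0 \<le> x \<longrightarrow> x < x0 \<longrightarrow> c x < cbar) \<and>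
    (\<forall>x. x0 < x \<longrightarrow> x \<le> R \<longrightarrow> cbar < c x) \<and> (0 < x0 \<longrightarrow> c x0 = cbar)"
proof (cases "cbar < c 0")
  case True
  then show ?thesis
    using c_mono[of 0] R_pos by (intro exI[of _ 0]) (auto intro: less_le_trans)
next
  case False
  have "continuous_on {0..R} c"
    by (rule continuous_on_subset[OF c_cont]) auto
  then obtain x0 where x0: "0 \<le> x0" "x0 \<le> R" "c x0 = cbar"
    using IVT'[of c 0 cbar R] False c_R cbar_less_cB R_pos by auto
  have "c x < cbar" if "0 \<le> x" "x < x0" for x
  proof -
    have "c x \<le> cbar" "c x \<noteq> cbar"
      using c_mono[of x x0] c_strict_mono[of x x0] that x0 cbar_pos by auto
    then show ?thesis by simp
  qed
  moreover have "cbar < c x" if "x0 < x" "x \<le> R" for x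
    using c_strict_mono[of x0 x] that x0 cbar_pos by simp
  ultimately show ?thesis
    using x0 by blast
qed

lemma switch_point_unique:
  assumes "0 \<le> x0" "x0 \<le> R" "\<And>x. 0 \<le> x \<Longrightarrow> x < x0 \<Longrightarrow> c x < cbar"
    and "\<And>x. x0 < x \<Longrightarrow> x \<le> R \<Longrightarrow> cbar < c x"
  shows "x0 = switch_point gp gm R \<and> \<sigma> = R * (sqrt ((gp + gm) * gm) - gm)"
proof -
  have "DERIV dp x :> gm" if "0 < x" "x < x0" for x
    using dp_deriv[of x] assms(3)[of x] assms(2) that by (simp add: Gr_def)
  moreover have "DERIV dp x :> - gp" if "x0 < x" "x < R" for x
    using dp_deriv[of x] assms(4)[of x] assms(1) that by (simp add: Gr_def)
  ultimately show ?thesis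
    using pressure_switch_point[OF gp_pos gm_pos assms(1,2) p_deriv dp_cont] dp_0 p_0 p_R sigma_eq
    by auto
qed

lemma switch_point_crossing:
  "\<sigma> = R * (sqrt ((gp + gm) * gm) - gm) \<and> c (switch_point gp gm R) = cbar \<and>
    (\<forall>x. 0 \<le> x \<longrightarrow> x < switch_point gp gm R \<longrightarrow> c x < cbar) \<and>
    (\<forall>x. switch_point gp gm R < x \<longrightarrow> x \<le> R \<longrightarrow> cbar < c x)"
proof -
  obtain x0 where x0: "0 \<le> x0" "x0 \<le> R" "\<And>x. 0 \<le> x \<Longrightarrow> x < x0 \<Longrightarrow> c x < cbar"
    "\<And>x. x0 < x \<Longrightarrow> x \<le> R \<Longrightarrow> cbar < c x" "0 < x0 \<Longrightarrow> c x0 = cbar"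
    using switch_point_exists by blast
  moreover have "x0 = switch_point gp gm R \<and> \<sigma> = R * (sqrt ((gp + gm) * gm) - gm)"
    by (rule switch_point_unique[OF x0(1-4)])
  ultimately show ?thesis
    using switch_point_bounds[OF gp_pos gm_pos R_pos] by auto
qed

lemma speed_eq: "\<sigma> = R * (sqrt ((gp + gm) * gm) - gm)"
  using switch_point_crossing by blast

lemma c_at_switch_point: "c (switch_point gp gm R) = cbar"
  using switch_point_crossing by blast

lemma c_below_switch_point:
  assumes "x < switch_point gp gm R"
  shows "c x < cbar"
proof (cases "0 \<le> x")
  case True
  then show ?thesis
    using switch_point_crossing assms by blast
next
  case False
  have "c 0 < cbar"
    using switch_point_crossing switch_point_bounds[OF gp_pos gm_pos R_pos] by blast
  then show ?thesis
    using c_mono[of x 0] False R_pos by simp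
qed

text \<open>Behind the front \<open>c < cbar\<close>, hence \<open>G(c) = -g\<^sub>-\<close> in \<open>-\<sigma> n' = n G(c)\<close>.\<close>
lemma n_behind: "x < 0 \<Longrightarrow> n x = exp (gm / \<sigma> * x)"
proof -
  assume "x < 0"
  have "n 0 = n x * exp (gm / \<sigma> * (0 - x))"
  proof (rule linear_ode_solution)
    show "continuous_on {x..0} n"
      by (rule continuous_on_subset[OF n_cont]) auto
    fix t assume t: "x < t" "t < 0"
    have "c t < cbar"
      using c_below_switch_point switch_point_bounds[OF gp_pos gm_pos R_pos] t by simp
    then have "(n has_real_derivative gm / \<sigma> * n t) (at t within {..0})"
      using n_deriv[of t] t by (simp add: Gr_def mult.commute)
    then show "DERIV n t :> gm / \<sigma> * n t"
      using t by (intro DERIV_within_interval_imp_at[where a = x and b = 0]) auto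
  qed (use \<open>x < 0\<close> in simp)
  then show ?thesis
    using n_front[of 0] R_pos by (simp add: exp_minus field_simps)
qed

lemma psi_behind:
  assumes "x < 0"
  shows "psi lam nc (n x) = lam * nc"
proof -
  have "gm / \<sigma> * x < 0"
    using sigma_pos gm_pos assms by (intro mult_pos_neg) simp_all
  then have "0 < n x" "n x < 1"
    using n_behind[OF assms] by simp_all
  then show ?thesis
    by (simp add: psi_def)
qed

lemma dc_DERIV_behind: "x < 0 \<Longrightarrow> DERIV dc x :> lam * nc * c x"
  using psi_behind R_pos by (intro dc_DERIV[where a = "x - 1" and b = "x / 2"]) auto

lemma dc_0: "dc 0 = sqrt lam * sqrt nc * c 0"
proof (rule nonneg_nondecreasing_solution_slope)
  show "0 < sqrt lam * sqrt nc"
    using lam_pos nc_pos by simp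
  show "continuous_on {..0} c" "continuous_on {..0} dc"
    using R_pos by (auto intro: continuous_on_subset[OF c_cont] continuous_on_subset[OF dc_cont])
  fix t :: real assume "t < 0"
  then show "DERIV c t :> dc t" "DERIV dc t :> (sqrt lam * sqrt nc)\<^sup>2 * c t"
    using c_DERIV dc_DERIV_behind R_pos lam_pos nc_pos by (auto simp: power_mult_distrib)
qed (use c_nonneg dc_nonneg R_pos in auto)

lemma c_front: "0 \<le> x \<Longrightarrow> x \<le> R \<Longrightarrow> c x = c 0 * hprof lam nc x"
proof -
  assume x: "0 \<le> x" "x \<le> R"
  have "c x = c 0 * cosh (sqrt lam * (x - 0)) + dc 0 / sqrt lam * sinh (sqrt lam * (x - 0))"
  proof (rule second_order_ode_cosh_sinh)
    show "continuous_on {0..x} c" "continuous_on {0..x} dc"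
      using x by (auto intro: continuous_on_subset[OF c_cont] continuous_on_subset[OF dc_cont])
    fix t assume "0 < t" "t < x"
    then show "DERIV c t :> dc t" "DERIV dc t :> (sqrt lam)\<^sup>2 * c t"
      using c_DERIV dc_DERIV_front x lam_pos by auto
  qed (use x lam_pos in auto)
  then show ?thesis
    using lam_pos by (simp add: dc_0 hprof_def algebra_simps)
qed

lemma Ffun_root: "Ffun lam nc gp gm cbar cB R = 0"
proof -
  have cB_eq: "cB = c 0 * hprof lam nc R"
    using c_front[of R] c_R R_pos by simp
  have cbar_eq: "cbar = c 0 * hprof lam nc (switch_point gp gm R)"
    using c_front[of "switch_point gp gm R"] c_at_switch_point switch_point_bounds[OF gp_pos gm_pos R_pos]
    by simp
  have "c 0 \<noteq> 0" "hprof lam nc R \<noteq> 0"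
    using cB_eq cbar_less_cB cbar_pos hprof_pos[of lam nc R] lam_pos nc_pos R_pos by auto
  then show ?thesis
    unfolding Ffun_eq_hprof switch_point_def[symmetric] cbar_eq cB_eq by simp
qed

end

lemma (in tw_params) monotone_TW_imp_root:
  assumes "monotone_TW lam nc gp gm cbar cB \<sigma> R"
  shows "0 < R \<and> Ffun lam nc gp gm cbar cB R = 0 \<and> \<sigma> = R * (sqrt ((gp + gm) * gm) - gm)"
proof -
  obtain n c p dc dp where "monotone_wave lam nc gp gm cbar cB \<sigma> R n c p dc dp"
    using monotone_TW_imp_monotone_wave[OF assms] .
  then interpret monotone_wave lam nc gp gm cbar cB \<sigma> R n c p dc dp .
  show ?thesis
    using R_pos Ffun_root speed_eq by simp
qed

section \<open>Every root of \<open>Ffun\<close> carries a monotone wave\<close>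

locale front_root = tw_params +
  fixes R :: real
  assumes R_pos: "0 < R" and root: "Ffun lam nc gp gm cbar cB R = 0"
begin

definition wave_speed :: real where
  "wave_speed = R * (sqrt ((gp + gm) * gm) - gm)"

definition wave_c0 :: real where
  "wave_c0 = cB / hprof lam nc R"

definition wave_n :: "real \<Rightarrow> real" where
  "wave_n x = (if x \<le> 0 then exp (gm / wave_speed * x) else if x \<le> R then 1 else 0)"

text \<open>\<open>wave_c_ext\<close> continues \<open>wave_c\<close> past \<open>R\<close> as a \<open>C\<^sup>1\<close> function, so that the one-sided
  derivative of \<open>wave_c\<close> at \<open>R\<close> is read off from \<open>wave_dc\<close>.\<close>
definition wave_c_ext :: "real \<Rightarrow> real" where
  "wave_c_ext x = (if x \<le> 0 then wave_c0 * exp (sqrt lam * sqrt nc * x) else wave_c0 * hprof lam nc x)"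

definition wave_dc :: "real \<Rightarrow> real" where
  "wave_dc x = (if x \<le> 0 then wave_c0 * (sqrt lam * sqrt nc) * exp (sqrt lam * sqrt nc * x)
     else wave_c0 * (sqrt lam * dhprof lam nc x))"

definition wave_c :: "real \<Rightarrow> real" where
  "wave_c x = (if x \<le> R then wave_c_ext x else cB)"

definition wave_p_ext :: "real \<Rightarrow> real" where
  "wave_p_ext x = (if x \<le> switch_point gp gm R then gm / 2 * x\<^sup>2
     else gm / 2 * x\<^sup>2 - (gp + gm) / 2 * (x - switch_point gp gm R)\<^sup>2)"

definition wave_dp :: "real \<Rightarrow> real" where
  "wave_dp x = (if x \<le> switch_point gp gm R then gm * x
     else gm * x - (gp + gm) * (x - switch_point gp gm R))"

definition wave_p :: "real \<Rightarrow> real" where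
  "wave_p x = (if 0 \<le> x \<and> x \<le> R then wave_p_ext x else 0)"

lemma switch_point_pos: "0 < switch_point gp gm R" and switch_point_less: "switch_point gp gm R < R"
  using switch_point_bounds[OF gp_pos gm_pos R_pos] by auto

lemma wave_speed_pos: "0 < wave_speed"
  using speed_factor_pos[OF gp_pos gm_pos] R_pos by (simp add: wave_speed_def)

lemma hprof_R_pos: "0 < hprof lam nc R"
  using lam_pos nc_pos R_pos by (simp add: hprof_pos)

lemma wave_c0_pos: "0 < wave_c0"
  using hprof_R_pos cbar_pos cbar_less_cB by (simp add: wave_c0_def)

lemma wave_c0_hprof_R: "wave_c0 * hprof lam nc R = cB"
  using hprof_R_pos by (simp add: wave_c0_def)

lemma wave_c0_hprof_switch_point: "wave_c0 * hprof lam nc (switch_point gp gm R) = cbar"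
proof -
  have "hprof lam nc (switch_point gp gm R) = cbar / cB * hprof lam nc R"
    using root by (simp add: Ffun_eq_hprof switch_point_def)
  then show ?thesis
    using hprof_R_pos cbar_pos cbar_less_cB by (simp add: wave_c0_def)
qed

lemma wave_c_ext_DERIV: "DERIV wave_c_ext x :> wave_dc x"
  unfolding wave_c_ext_def wave_dc_def
  by (rule DERIV_if_le) (auto intro!: derivative_eq_intros)

lemma wave_dc_cont: "continuous_on UNIV wave_dc"
proof -
  have "continuous_on ({..0} \<union> {0..}) wave_dc"
    unfolding wave_dc_def by (rule continuous_on_cases) (auto intro!: continuous_intros)
  moreover have "{..0} \<union> {0..} = (UNIV :: real set)" by auto
  ultimately show ?thesis by simp
qed

lemma wave_dc_nonneg: "0 \<le> wave_dc x"
  unfolding wave_dc_def using wave_c0_pos lam_pos nc_pos dhprof_pos[of lam nc x]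
  by (auto intro!: mult_nonneg_nonneg)

lemma wave_c_nonneg: "0 \<le> wave_c x"
  unfolding wave_c_def wave_c_ext_def
  using wave_c0_pos cbar_pos cbar_less_cB hprof_pos[of lam nc x] lam_pos nc_pos
  by (auto intro!: mult_nonneg_nonneg)

lemma wave_dc_DERIV:
  assumes "x \<noteq> 0" "x \<le> R"
  shows "DERIV wave_dc x :> psi lam nc (wave_n x) * wave_c x"
proof (cases "x < 0")
  case True
  have "DERIV wave_dc x :> (sqrt lam * sqrt nc)\<^sup>2 * (wave_c0 * exp (sqrt lam * sqrt nc * x))"
    unfolding wave_dc_def
    by (rule has_field_derivative_transform_within_open[of _ _ _ "{..<0}"])
      (use True in \<open>auto intro!: derivative_eq_intros simp: power2_eq_square ac_simps\<close>)
  moreover have "gm / wave_speed * x < 0"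
    using True wave_speed_pos gm_pos by (intro mult_pos_neg) simp_all
  then have "0 < wave_n x" "wave_n x < 1"
    using True by (simp_all add: wave_n_def)
  ultimately show ?thesis
    using True lam_pos nc_pos R_pos
    by (simp add: psi_def wave_c_def wave_c_ext_def power_mult_distrib)
next
  case False
  with assms(1) have "0 < x" by simp
  have "DERIV wave_dc x :> (sqrt lam)\<^sup>2 * (wave_c0 * hprof lam nc x)"
    unfolding wave_dc_def
    by (rule has_field_derivative_transform_within_open[of _ _ _ "{0<..}"])
      (use \<open>0 < x\<close> in \<open>auto intro!: derivative_eq_intros simp: power2_eq_square ac_simps\<close>)
  then show ?thesis
    using \<open>0 < x\<close> assms(2) lam_pos by (simp add: psi_def wave_n_def wave_c_def wave_c_ext_def)
qed

lemma wave_c_at_switch_point: "wave_c (switch_point gp gm R) = cbar"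
  using switch_point_pos switch_point_less wave_c0_hprof_switch_point
  by (simp add: wave_c_def wave_c_ext_def)

lemma wave_c_below_switch_point:
  assumes "x < switch_point gp gm R"
  shows "wave_c x < cbar"
proof (cases "x \<le> 0")
  case True
  have "wave_c0 * exp (sqrt lam * sqrt nc * x) \<le> wave_c0"
    using True wave_c0_pos lam_pos nc_pos by (simp add: mult_nonneg_nonpos)
  moreover have "wave_c0 * 1 < wave_c0 * hprof lam nc (switch_point gp gm R)"
    using hprof_strict_mono[OF lam_pos nc_pos order_refl switch_point_pos] wave_c0_pos
    by (intro mult_strict_left_mono) simp_all
  then have "wave_c0 < cbar"
    using wave_c0_hprof_switch_point by simp
  ultimately show ?thesis
    using True R_pos by (simp add: wave_c_def wave_c_ext_def)
next
  case False
  then have "hprof lam nc x < hprof lam nc (switch_point gp gm R)"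
    using hprof_strict_mono[OF lam_pos nc_pos] assms by simp
  then have "wave_c0 * hprof lam nc x < cbar"
    using mult_strict_left_mono wave_c0_pos wave_c0_hprof_switch_point by metis
  then show ?thesis
    using False assms switch_point_less by (simp add: wave_c_def wave_c_ext_def)
qed

lemma wave_c_above_switch_point:
  assumes "switch_point gp gm R < x" "x \<le> R"
  shows "cbar < wave_c x"
proof -
  have "hprof lam nc (switch_point gp gm R) < hprof lam nc x"
    using hprof_strict_mono[OF lam_pos nc_pos] assms switch_point_pos by simp
  then have "cbar < wave_c0 * hprof lam nc x"
    using mult_strict_left_mono wave_c0_pos wave_c0_hprof_switch_point by metis
  then show ?thesis
    using assms switch_point_pos by (simp add: wave_c_def wave_c_ext_def)
qed

lemma wave_p_ext_DERIV: "DERIV wave_p_ext x :> wave_dp x"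
  unfolding wave_p_ext_def wave_dp_def
  by (rule DERIV_if_le) (auto intro!: derivative_eq_intros)

lemma wave_dp_DERIV:
  assumes "x \<in> {0<..<R}" "wave_c x \<noteq> cbar"
  shows "DERIV wave_dp x :> - Gr gp gm cbar (wave_c x)"
proof -
  consider "x < switch_point gp gm R" | "switch_point gp gm R < x"
    using assms(2) wave_c_at_switch_point by fastforce
  then show ?thesis
  proof cases
    case 1
    have "DERIV wave_dp x :> gm"
      unfolding wave_dp_def
      by (rule has_field_derivative_transform_within_open[of _ _ _ "{..<switch_point gp gm R}"])
        (use 1 in \<open>auto intro!: derivative_eq_intros\<close>)
    then show ?thesis
      using wave_c_below_switch_point[OF 1] by (simp add: Gr_def)
  next
    case 2
    have "DERIV wave_dp x :> - gp"
      unfolding wave_dp_def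
      by (rule has_field_derivative_transform_within_open[of _ _ _ "{switch_point gp gm R<..}"])
        (use 2 in \<open>auto intro!: derivative_eq_intros\<close>)
    then show ?thesis
      using wave_c_above_switch_point[OF 2] assms(1) by (simp add: Gr_def)
  qed
qed

lemma wave_p_nonneg: "0 \<le> wave_p x"
proof -
  have "(gp + gm) * (x - switch_point gp gm R)\<^sup>2 \<le> gm * x\<^sup>2"
    if "switch_point gp gm R < x" "x \<le> R"
  proof -
    have "(1 - alpha gp gm) * x \<le> (1 - alpha gp gm) * R"
      using that alpha_less_1 by (intro mult_left_mono) auto
    then have "x - switch_point gp gm R \<le> alpha gp gm * x"
      by (simp add: switch_point_def algebra_simps)
    then have "(x - switch_point gp gm R)\<^sup>2 \<le> (alpha gp gm * x)\<^sup>2"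
      using that by (intro power_mono) auto
    then show ?thesis
      using gp_pos gm_pos by (simp add: power_mult_distrib alpha_squared[OF gp_pos gm_pos] field_simps)
  qed
  then show ?thesis
    using gm_pos by (auto simp: wave_p_def wave_p_ext_def)
qed

lemma R_minus_switch_point: "R - switch_point gp gm R = alpha gp gm * R"
  by (simp add: switch_point_def algebra_simps)

lemma wave_p_R: "wave_p R = 0"
proof -
  have "wave_p R = gm / 2 * R\<^sup>2 - (gp + gm) / 2 * (alpha gp gm * R)\<^sup>2"
    using R_pos switch_point_less by (simp add: wave_p_def wave_p_ext_def R_minus_switch_point)
  also have "\<dots> = R\<^sup>2 / 2 * (gm - (gp + gm) * (alpha gp gm)\<^sup>2)"
    by (simp add: power_mult_distrib algebra_simps)
  also have "\<dots> = 0"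
    using gp_pos gm_pos by (simp add: alpha_squared)
  finally show ?thesis .
qed

lemma wave_dp_R: "wave_speed = - wave_dp R"
proof -
  have "- wave_dp R = (gp + gm) * (alpha gp gm * R) - gm * R"
    using switch_point_less by (simp add: wave_dp_def R_minus_switch_point)
  also have "\<dots> = R * ((gp + gm) * alpha gp gm - gm)"
    by (simp add: algebra_simps)
  finally show ?thesis
    using alpha_scaled[OF gp_pos gm_pos] by (simp add: wave_speed_def)
qed

lemma wave_n_deriv:
  assumes "x \<le> 0"
  shows "(wave_n has_real_derivative - (wave_n x * Gr gp gm cbar (wave_c x)) / wave_speed)
    (at x within {..0})"
proof -
  let ?k = "gm / wave_speed"
  have "wave_c x < cbar"
    using wave_c_below_switch_point switch_point_pos assms by simp
  then have "- (wave_n x * Gr gp gm cbar (wave_c x)) / wave_speed = exp (?k * x) * ?k"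
    using assms by (simp add: Gr_def wave_n_def)
  moreover have "((\<lambda>x. exp (?k * x)) has_real_derivative exp (?k * x) * ?k) (at x within {..0})"
    by (rule DERIV_chain2[OF DERIV_exp DERIV_cmult_Id])
  ultimately have "((\<lambda>x. exp (?k * x)) has_real_derivative
      - (wave_n x * Gr gp gm cbar (wave_c x)) / wave_speed) (at x within {..0})"
    by simp
  then show ?thesis
    by (rule has_field_derivative_transform_within[where d = 1]) (use assms in \<open>simp_all add: wave_n_def\<close>)
qed

lemma wave_c_deriv: "x \<le> R \<Longrightarrow> (wave_c has_real_derivative wave_dc x) (at x within {..R})"
  by (rule has_field_derivative_transform_within[where d = 1, OF DERIV_subset[OF wave_c_ext_DERIV]])
    (auto simp: wave_c_def)

lemma wave_dc_integral:
  assumes "y \<le> x" "x \<le> R"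
  shows "((\<lambda>t. psi lam nc (wave_n t) * wave_c t) has_integral (wave_dc x - wave_dc y)) {y..x}"
proof (rule fundamental_theorem_of_calculus_interior_strong[of "{0}"])
  show "continuous_on {y..x} wave_dc"
    using wave_dc_cont by (rule continuous_on_subset) auto
  fix t assume "t \<in> {y<..<x} - {0}"
  then show "(wave_dc has_vector_derivative psi lam nc (wave_n t) * wave_c t) (at t)"
    using wave_dc_DERIV[of t] assms by (simp add: has_real_derivative_iff_has_vector_derivative)
qed (use assms in auto)

lemma wave_p_deriv: "x \<in> {0..R} \<Longrightarrow> (wave_p has_real_derivative wave_dp x) (at x within {0..R})"
  by (rule has_field_derivative_transform_within[where d = 1, OF DERIV_subset[OF wave_p_ext_DERIV]])
    (auto simp: wave_p_def)

lemma wave_dp_cont: "continuous_on {0..R} wave_dp"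
proof -
  have "continuous_on ({..switch_point gp gm R} \<union> {switch_point gp gm R..}) wave_dp"
    unfolding wave_dp_def by (rule continuous_on_cases) (auto intro!: continuous_intros)
  then show ?thesis
    by (rule continuous_on_subset) auto
qed

lemma TW_vitro_wave: "TW_vitro lam nc gp gm cbar cB wave_speed R wave_n wave_c wave_p"
  unfolding TW_vitro_def
proof (intro conjI)
  show "0 < wave_speed" "0 < R"
    by (rule wave_speed_pos R_pos)+
  have "gm / wave_speed * x \<le> 0" if "x \<le> 0" for x
    using that wave_speed_pos gm_pos by (intro mult_nonneg_nonpos) simp_all
  then show "\<forall>x. wave_n x \<le> 1"
    by (simp add: wave_n_def)
  show "continuous_on {..0} wave_n"
    by (rule continuous_on_eq[of _ "\<lambda>x. exp (gm / wave_speed * x)"])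
      (use wave_speed_pos in \<open>auto intro!: continuous_intros simp: wave_n_def\<close>)
  show "\<forall>x\<le>0. wave_c x \<noteq> cbar \<longrightarrow> (wave_n has_real_derivative
      - (wave_n x * Gr gp gm cbar (wave_c x)) / wave_speed) (at x within {..0})"
    using wave_n_deriv by blast
  show "\<forall>x\<in>{0..R}. wave_n x = 1" "\<forall>x>R. wave_n x = 0" "wave_n 0 = 1"
    using R_pos by (auto simp: wave_n_def)
  show "\<exists>dc. (\<forall>x\<le>R. (wave_c has_real_derivative dc x) (at x within {..R})) \<and>
      continuous_on {..R} dc \<and> (\<forall>y x. y \<le> x \<and> x \<le> R \<longrightarrow>
        ((\<lambda>t. psi lam nc (wave_n t) * wave_c t) has_integral (dc x - dc y)) {y..x})"
  proof (intro exI[of _ wave_dc] conjI allI impI)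
    show "continuous_on {..R} wave_dc"
      using wave_dc_cont by (rule continuous_on_subset) simp
  next
    fix x :: real assume "x \<le> R"
    then show "(wave_c has_real_derivative wave_dc x) (at x within {..R})"
      by (rule wave_c_deriv)
  next
    fix y x :: real assume "y \<le> x \<and> x \<le> R"
    then show "((\<lambda>t. psi lam nc (wave_n t) * wave_c t) has_integral (wave_dc x - wave_dc y)) {y..x}"
      using wave_dc_integral by blast
  qed
  show "wave_c R = cB" "\<forall>x>R. wave_c x = cB"
    using wave_c0_hprof_R R_pos by (simp_all add: wave_c_def wave_c_ext_def)
  show "bounded (wave_c ` {..0})"
    unfolding bounded_iff
  proof (intro exI ballI)
    fix y assume "y \<in> wave_c ` {..0}"
    then obtain x where "x \<le> 0" "y = wave_c0 * exp (sqrt lam * sqrt nc * x)"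
      using R_pos by (auto simp: wave_c_def wave_c_ext_def)
    then show "norm y \<le> wave_c0"
      using wave_c0_pos lam_pos nc_pos by (simp add: abs_mult mult_nonneg_nonpos)
  qed
  show "\<exists>dp. (\<forall>x\<in>{0..R}. (wave_p has_real_derivative dp x) (at x within {0..R})) \<and>
      continuous_on {0..R} dp \<and>
      (\<forall>x\<in>{0<..<R}. wave_c x \<noteq> cbar \<longrightarrow> (dp has_real_derivative - Gr gp gm cbar (wave_c x)) (at x)) \<and>
      wave_speed = - dp R \<and> dp 0 = 0"
  proof (intro exI[of _ wave_dp] conjI ballI impI)
    show "wave_dp 0 = 0"
      using switch_point_pos by (simp add: wave_dp_def)
  next
    fix x assume "x \<in> {0..R}"
    then show "(wave_p has_real_derivative wave_dp x) (at x within {0..R})"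
      by (rule wave_p_deriv)
  next
    fix x assume "x \<in> {0<..<R}" "wave_c x \<noteq> cbar"
    then show "(wave_dp has_real_derivative - Gr gp gm cbar (wave_c x)) (at x)"
      by (rule wave_dp_DERIV)
  qed (rule wave_dp_cont wave_dp_R)+
  show "wave_p 0 = 0" "wave_p R = 0" "\<forall>x. 0 \<le> wave_p x" "\<forall>x. x \<notin> {0..R} \<longrightarrow> wave_p x = 0"
    using switch_point_pos wave_p_R wave_p_nonneg by (auto simp: wave_p_def wave_p_ext_def)
qed

lemma monotone_TW_wave: "monotone_TW lam nc gp gm cbar cB wave_speed R"
  unfolding monotone_TW_def
proof (intro exI conjI allI impI)
  show "TW_vitro lam nc gp gm cbar cB wave_speed R wave_n wave_c wave_p"
    by (rule TW_vitro_wave)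
  fix x
  show "0 \<le> wave_n x" "0 \<le> wave_c x" "0 \<le> wave_p x"
    by (simp_all add: wave_n_def wave_c_nonneg wave_p_nonneg)
  fix d assume "x \<le> R" "(wave_c has_real_derivative d) (at x within {..R})"
  moreover have "at x within {..R} \<noteq> bot"
  proof -
    have "at_left x \<le> at x within {..R}"
      using \<open>x \<le> R\<close> by (intro at_le) auto
    then show ?thesis
      using trivial_limit_at_left_real by (metis bot.extremum_uniqueI)
  qed
  ultimately have "d = wave_dc x"
    using wave_c_deriv has_field_derivative_unique by blast
  then show "0 \<le> d"
    using wave_dc_nonneg by simp
qed

end

section \<open>Uniqueness and monotonicity of the speed\<close>

lemma (in tw_params) monotone_TW_iff:
  "monotone_TW lam nc gp gm cbar cB \<sigma> R \<longleftrightarrow>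
    0 < R \<and> Ffun lam nc gp gm cbar cB R = 0 \<and> \<sigma> = R * (sqrt ((gp + gm) * gm) - gm)"
proof
  assume "0 < R \<and> Ffun lam nc gp gm cbar cB R = 0 \<and> \<sigma> = R * (sqrt ((gp + gm) * gm) - gm)"
  then interpret front_root lam nc gp gm cbar cB R
    by unfold_locales auto
  show "monotone_TW lam nc gp gm cbar cB \<sigma> R"
    using monotone_TW_wave \<open>0 < R \<and> _\<close> by (simp add: wave_speed_def)
qed (rule monotone_TW_imp_root)

lemma (in tw_params) monotone_TW_ex1: "\<exists>!(\<sigma>, R). monotone_TW lam nc gp gm cbar cB \<sigma> R"
proof -
  obtain R where R: "0 < R \<and> Ffun lam nc gp gm cbar cB R = 0"
    and unique: "\<And>R'. 0 < R' \<and> Ffun lam nc gp gm cbar cB R' = 0 \<Longrightarrow> R' = R"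
    using Ffun_root_ex1 by blast
  show ?thesis
  proof (rule ex1I[of _ "(R * (sqrt ((gp + gm) * gm) - gm), R)"])
    fix y :: "real \<times> real"
    assume "case y of (\<sigma>, R) \<Rightarrow> monotone_TW lam nc gp gm cbar cB \<sigma> R"
    then show "y = (R * (sqrt ((gp + gm) * gm) - gm), R)"
      using unique by (cases y) (auto simp: monotone_TW_iff)
  qed (use R in \<open>simp add: monotone_TW_iff\<close>)
qed

lemma monotone_TW_speed_less:
  assumes "tw_params lam nc gp gm cbar cB" "tw_params lam nc gp gm cbar' cB'"
    and "cbar' / cB' < cbar / cB"
    and "monotone_TW lam nc gp gm cbar cB \<sigma> R" "monotone_TW lam nc gp gm cbar' cB' \<sigma>' R'"
  shows "\<sigma> < \<sigma>'"
proof -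
  have root: "0 < R" "Ffun lam nc gp gm cbar cB R = 0" "\<sigma> = R * (sqrt ((gp + gm) * gm) - gm)"
    using tw_params.monotone_TW_iff[OF assms(1)] assms(4) by auto
  have root': "0 < R'" "Ffun lam nc gp gm cbar' cB' R' = 0" "\<sigma>' = R' * (sqrt ((gp + gm) * gm) - gm)"
    using tw_params.monotone_TW_iff[OF assms(2)] assms(5) by auto
  from assms(1,2) have "R < R'"
    unfolding tw_params_def
    by (intro Ffun_root_less[OF _ _ _ _ _ _ _ root(1) root'(1) root(2) root'(2) assms(3)]) auto
  then show ?thesis
    using root(3) root'(3) speed_factor_pos[of gp gm] assms(1) by (simp add: tw_params_def)
qed

theorem theorem3p2:
  fixes lam nc gp gm cbar cB :: real
  assumes "lam > 0" and "nc > 0" and "nc < 1" and "gp > 0" and "gm > 0"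
    and "cbar > 0" and "cB > cbar"
  shows "(\<exists>!R. R > 0 \<and> Ffun lam nc gp gm cbar cB R = 0)
    \<and> (\<exists>!(\<sigma>, R). monotone_TW lam nc gp gm cbar cB \<sigma> R)
    \<and> (\<forall>\<sigma> R. monotone_TW lam nc gp gm cbar cB \<sigma> R \<longrightarrow>
          R > 0 \<and> Ffun lam nc gp gm cbar cB R = 0
          \<and> \<sigma> = R * (sqrt ((gp + gm) * gm) - gm))
    \<and> (\<forall>cB' \<sigma> R \<sigma>' R'. cB < cB' \<longrightarrow> monotone_TW lam nc gp gm cbar cB \<sigma> R \<longrightarrow>
          monotone_TW lam nc gp gm cbar cB' \<sigma>' R' \<longrightarrow> \<sigma> < \<sigma>')
    \<and> (\<forall>cbar' \<sigma> R \<sigma>' R'. cbar < cbar' \<longrightarrow> cbar' < cB \<longrightarrow>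
          monotone_TW lam nc gp gm cbar cB \<sigma> R \<longrightarrow>
          monotone_TW lam nc gp gm cbar' cB \<sigma>' R' \<longrightarrow> \<sigma>' < \<sigma>)"
proof -
  have params: "tw_params lam nc gp gm cbar cB"
    using assms by unfold_locales
  then interpret tw_params lam nc gp gm cbar cB .
  have "\<sigma> < \<sigma>'" if "cB < cB'" "monotone_TW lam nc gp gm cbar cB \<sigma> R"
    "monotone_TW lam nc gp gm cbar cB' \<sigma>' R'" for cB' \<sigma> R \<sigma>' R'
    using that assms
    by (intro monotone_TW_speed_less[OF params _ _ that(2,3)])
      (auto simp: tw_params_def divide_strict_left_mono)
  moreover have "\<sigma>' < \<sigma>" if "cbar < cbar'" "cbar' < cB" "monotone_TW lam nc gp gm cbar cB \<sigma> R"
    "monotone_TW lam nc gp gm cbar' cB \<sigma>' R'" for cbar' \<sigma> R \<sigma>' R'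
    using that assms
    by (intro monotone_TW_speed_less[OF _ params _ that(4,3)])
      (auto simp: tw_params_def divide_strict_right_mono)
  ultimately show ?thesis
    using Ffun_root_ex1 monotone_TW_ex1 monotone_TW_imp_root by blast
qed

end
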